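(* Let $E$ be a topological space such that (i) $E$ has a countable basis of open sets, and (ii) for every closed subset $F$ of $E$, the intersection of countably many $\mathbf{\Pi}^0_2(E)$ subsets of $F$ each of which is dense in $F$ is dense in $F$. Then $\bigcup_{\alpha<\aleph_1}\mathbf{D}_\alpha(E)=\mathbf{\Delta}^0_2(E)$.
   Context: $\mathbf{\Sigma}^0_2(E)$: countable unions of sets $U\setminus V$ with $U,V$ open in $E$; $\mathbf{\Pi}^0_2(E)$: complements of $\mathbf{\Sigma}^0_2(E)$ sets; $\mathbf{\Delta}^0_2(E)=\mathbf{\Sigma}^0_2(E)\cap\mathbf{\Pi}^0_2(E)$. Parity of ordinals: every ordinal is uniquely $\lambda+n$ with $\lambda$ zero or limit and $n<\omega$; its parity is that of $n$; $\alpha\sim\beta$ means same parity. For an ordinal $\alpha$ and a sequence $(A_\beta)_{\beta<\alpha}$ of subsets of $E$, $D_\alpha((A_\beta)_{\beta<\alpha})=\bigcup_{\beta<\alpha,\ \beta\not\sim\alpha}\big(A_\beta\setminus\bigcup_{\gamma<\beta}A_\gamma\big)$. $\mathbf{D}_\alpha(E)$ is the class of all sets $D_\alpha((A_\beta)_{\beta<\alpha})$ with every $A_\beta$ open in $E$. $\aleph_1$ denotes the first uncountable ordinal. *)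

theory Defs
  imports "HOL-Analysis.Analysis"
begin

definition Sigma02 :: "'a::topological_space set set" where
  "Sigma02 = {S. \<exists>U V :: nat \<Rightarrow> 'a set. (\<forall>n. open (U n) \<and> open (V n)) \<and> S = (\<Union>n. U n - V n)}"

definition Pi02 :: "'a::topological_space set set" where
  "Pi02 = {S. - S \<in> Sigma02}"

definition Delta02 :: "'a::topological_space set set" where
  "Delta02 = Sigma02 \<inter> Pi02"

text \<open>Ordinals are represented by well-orders r (the ordinal is the order type of r);
  an ordinal beta < alpha is an element b of Field r, with order type that of underS r b.
  An element x is "zero or limit" if the set of its strict predecessors has no maximum.\<close>

definition is_lim_elem :: "'i rel \<Rightarrow> 'i \<Rightarrow> bool" where
  "is_lim_elem r x \<longleftrightarrow> x \<in> Field r \<and> \<not> (\<exists>y\<in>underS r x. \<forall>z\<in>underS r x. (z, y) \<in> r)"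

text \<open>If the order type is lambda + n (lambda zero or limit), the elements y after which
  no limit element occurs are exactly lambda, ..., lambda+n-1 (for n > 0); when n = 0 this
  set is empty or infinite. Hence the ordinal is odd iff this set is finite of odd size.\<close>

definition fin_part :: "'i rel \<Rightarrow> 'i set" where
  "fin_part r = {y \<in> Field r. \<forall>z \<in> aboveS r y. \<not> is_lim_elem r z}"

definition ord_odd :: "'i rel \<Rightarrow> bool" where
  "ord_odd r \<longleftrightarrow> finite (fin_part r) \<and> odd (card (fin_part r))"

definition Dop :: "'i rel \<Rightarrow> ('i \<Rightarrow> 'a set) \<Rightarrow> 'a set" where
  "Dop r A = \<Union>{A b - \<Union>{A c | c. c \<in> underS r b} | b.
      b \<in> Field r \<and> ord_odd (Restr r (underS r b)) \<noteq> ord_odd r}"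

definition Dclass :: "'i rel \<Rightarrow> 'a::topological_space set set" where
  "Dclass r = {Dop r A | A. \<forall>b\<in>Field r. open (A b)}"

end

(*
  The classes D_alpha lie in Delta^0_2 for an elementary reason: x lies in
  D_alpha((A_beta)) iff the least beta with x in A_beta has the parity opposite to alpha,
  so the set and its complement are both countable unions of differences of open sets.

  The converse is Hausdorff's argument. For S in Delta^0_2, iterate the derivative
  D(F) = F \<inter> cl(F \<inter> S) \<inter> cl(F - S) (called mixed_part S F) transfinitely from the
  whole space, taking intersections at limits. Since F \<inter> S and F - S are Pi^0_2, the
  Baire hypothesis rules out a nonempty closed F with D(F) = F. Hence every point lies in
  exactly one layer F - D(F), and second countability leaves only countably many layers.
  On the layer of F, S agrees with the open set -cl(F - S), and the whole layer lies in the
  open set -D(F). Indexing these sets by (F, 1) and (F, 2) in the ordinal omega * theta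
  presents S as a D_(omega * theta) set, which is then re-indexed by a well-order on nat.
*)
theory Submission
  imports Defs
begin

lemma Sigma02I:
  fixes U V :: "nat \<Rightarrow> 'a::topological_space set"
  assumes "\<And>n. open (U n)" and "\<And>n. open (V n)"
  shows "(\<Union>n. U n - V n) \<in> Sigma02"
  unfolding Sigma02_def using assms by (intro CollectI exI[of _ U] exI[of _ V]) simp

lemma Sigma02_countable_UN:
  fixes U V :: "'i \<Rightarrow> 'a::topological_space set"
  assumes "countable I" and "\<And>i. i \<in> I \<Longrightarrow> open (U i) \<and> open (V i)"
  shows "(\<Union>i\<in>I. U i - V i) \<in> Sigma02"
proof (cases "I = {}")
  case True
  then show ?thesis using Sigma02I[of "\<lambda>_. {}" "\<lambda>_. {}"] by simp
next
  case False
  define e where "e = from_nat_into I"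
  have "range e = I" unfolding e_def using False assms(1) by simp
  then have "(\<Union>i\<in>I. U i - V i) = (\<Union>n. U (e n) - V (e n))" by auto
  also have "\<dots> \<in> Sigma02"
    using assms(2) \<open>range e = I\<close> by (intro Sigma02I) auto
  finally show ?thesis .
qed

lemma Sigma02_Un:
  assumes "X \<in> Sigma02" and "Y \<in> Sigma02"
  shows "X \<union> Y \<in> Sigma02"
proof -
  obtain U V :: "nat \<Rightarrow> 'a set" where UV: "\<forall>n. open (U n) \<and> open (V n)" "X = (\<Union>n. U n - V n)"
    using assms(1) unfolding Sigma02_def by blast
  obtain U' V' :: "nat \<Rightarrow> 'a set" where UV': "\<forall>n. open (U' n) \<and> open (V' n)" "Y = (\<Union>n. U' n - V' n)"
    using assms(2) unfolding Sigma02_def by blast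
  have "X \<union> Y = (\<Union>i\<in>UNIV. case_sum U U' i - case_sum V V' i)"
    unfolding UV UV' by (simp add: UNIV_sum UN_Un image_image)
  also have "\<dots> \<in> Sigma02"
    using UV UV' by (intro Sigma02_countable_UN) (auto split: sum.split)
  finally show ?thesis .
qed

lemma Sigma02_Diff_open: "open U \<Longrightarrow> open V \<Longrightarrow> U - V \<in> Sigma02"
  using Sigma02_countable_UN[of "{()}" "\<lambda>_. U" "\<lambda>_. V"] by simp

lemma open_Sigma02: "open U \<Longrightarrow> U \<in> Sigma02"
  using Sigma02_Diff_open[of U "{}"] by simp

lemma closed_Sigma02: "closed C \<Longrightarrow> C \<in> Sigma02"
  using Sigma02_Diff_open[of UNIV "- C"] by (simp add: open_Compl Diff_Compl)

section \<open>Least indices and the classes D_alpha\<close>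

definition first_index_in :: "'i rel \<Rightarrow> ('i \<Rightarrow> 'a set) \<Rightarrow> 'i set \<Rightarrow> 'a set" where
  "first_index_in r A B = (\<Union>b\<in>B. A b - \<Union>(A ` underS r b))"

lemma Dop_eq_first_index_in:
  "Dop r A = first_index_in r A {b \<in> Field r. ord_odd (Restr r (underS r b)) \<noteq> ord_odd r}"
  unfolding Dop_def first_index_in_def by (simp only: setcompr_eq_image Collect_mem_eq)

lemma Well_order_first_index:
  assumes "Well_order r" and "b \<in> Field r" and "x \<in> A b"
  obtains b' where "b' \<in> Field r" "x \<in> A b'" "\<forall>c\<in>underS r b'. x \<notin> A c"
proof -
  have "wf (r - Id)" using assms(1) by (simp add: well_order_on_def)
  then obtain b' where "b' \<in> {b\<in>Field r. x \<in> A b}"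
    and min: "\<And>c. (c, b') \<in> r - Id \<Longrightarrow> c \<notin> {b\<in>Field r. x \<in> A b}"
    using wfE_min[of "r - Id" b "{b\<in>Field r. x \<in> A b}"] assms(2,3) by blast
  moreover have "x \<notin> A c" if "c \<in> underS r b'" for c
    using that min[of c] by (auto simp: underS_def intro: FieldI1)
  ultimately show thesis using that by blast
qed

lemma mem_first_index_in_iff:
  assumes "Well_order r" and "b \<in> Field r" "x \<in> A b" "\<forall>c\<in>underS r b. x \<notin> A c"
    and "B \<subseteq> Field r"
  shows "x \<in> first_index_in r A B \<longleftrightarrow> b \<in> B"
proof
  assume "x \<in> first_index_in r A B"
  then obtain b' where b': "b' \<in> B" "x \<in> A b'" "\<forall>c\<in>underS r b'. x \<notin> A c"
    unfolding first_index_in_def by blast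
  have "total_on (Field r) r" using assms(1) by (simp add: well_order_on_def linear_order_on_def)
  have "b' = b"
  proof (rule ccontr)
    assume "b' \<noteq> b"
    moreover have "b' \<in> Field r" using b'(1) assms(5) by blast
    ultimately have "b \<in> underS r b' \<or> b' \<in> underS r b"
      using \<open>total_on (Field r) r\<close> assms(2) unfolding total_on_def underS_def by blast
    then show False using assms(3,4) b'(2,3) by blast
  qed
  then show "b \<in> B" using b'(1) by simp
qed (use assms in \<open>auto simp: first_index_in_def\<close>)

lemma mem_Dop_iff_first_index:
  assumes "Well_order r" and "b \<in> Field r" "x \<in> A b" "\<forall>c\<in>underS r b. x \<notin> A c"
  shows "x \<in> Dop r A \<longleftrightarrow> ord_odd (Restr r (underS r b)) \<noteq> ord_odd r"
  unfolding Dop_eq_first_index_in using mem_first_index_in_iff[OF assms] assms(2) by auto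

lemma first_index_in_Sigma02:
  fixes A :: "'i \<Rightarrow> 'a::topological_space set"
  assumes "countable B" "B \<subseteq> Field r" and "\<forall>b\<in>Field r. open (A b)"
  shows "first_index_in r A B \<in> Sigma02"
  unfolding first_index_in_def
  using assms by (intro Sigma02_countable_UN) (auto simp: underS_def intro: FieldI1)

lemma Dop_Delta02:
  fixes A :: "'i \<Rightarrow> 'a::topological_space set"
  assumes wo: "Well_order r" and "countable (Field r)" and "\<forall>b\<in>Field r. open (A b)"
  shows "Dop r A \<in> Delta02"
proof -
  define P where "P = {b \<in> Field r. ord_odd (Restr r (underS r b)) \<noteq> ord_odd r}"
  have D: "Dop r A = first_index_in r A P"
    unfolding P_def by (rule Dop_eq_first_index_in)
  have "x \<in> - Dop r A \<longleftrightarrow> x \<in> - (\<Union>b\<in>Field r. A b) \<union> first_index_in r A (Field r - P)" for x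
  proof (cases "\<exists>b\<in>Field r. x \<in> A b")
    case True
    then obtain b where b: "b \<in> Field r" "x \<in> A b" "\<forall>c\<in>underS r b. x \<notin> A c"
      using Well_order_first_index[OF wo] by metis
    have "x \<in> Dop r A \<longleftrightarrow> b \<in> P"
      using mem_Dop_iff_first_index[OF wo b] b(1) by (simp add: P_def)
    moreover have "x \<in> first_index_in r A (Field r - P) \<longleftrightarrow> b \<in> Field r - P"
      by (rule mem_first_index_in_iff[OF wo b]) blast
    ultimately show ?thesis using b by blast
  next
    case False
    then show ?thesis unfolding D first_index_in_def P_def by blast
  qed
  then have compl_Dop: "- Dop r A = - (\<Union>b\<in>Field r. A b) \<union> first_index_in r A (Field r - P)"
    by (rule set_eqI)
  have Sigma02_first: "first_index_in r A B \<in> Sigma02" if "B \<subseteq> Field r" for B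
    using that assms(2,3) by (intro first_index_in_Sigma02) (auto intro: countable_subset)
  have "- Dop r A \<in> Sigma02"
    unfolding compl_Dop
  proof (rule Sigma02_Un[OF closed_Sigma02 Sigma02_first])
    show "closed (- (\<Union>b\<in>Field r. A b))"
      using assms(3) by (intro closed_Compl open_UN) blast
  qed blast
  moreover have "Dop r A \<in> Sigma02"
    unfolding D by (rule Sigma02_first) (simp add: P_def)
  ultimately show ?thesis unfolding Delta02_def Pi02_def by blast
qed

lemma aboveS_Field: "y \<in> aboveS R x \<Longrightarrow> y \<in> Field R"
  unfolding aboveS_def by (blast intro: FieldI2)

lemma fin_part_aboveS:
  assumes "trans r" "antisym r" and "y \<in> fin_part r" "z \<in> aboveS r y"
  shows "z \<in> fin_part r"
proof -
  have "aboveS r z \<subseteq> aboveS r y"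
    using assms unfolding aboveS_def trans_def antisym_def by blast
  then show ?thesis
    using assms(3,4) aboveS_Field[OF assms(4)] unfolding fin_part_def by auto
qed

context
  fixes r :: "'i rel" and b :: 'i
  assumes wo: "Well_order r"
begin

lemma Field_Restr_underS: "Field (Restr r (underS r b)) = underS r b"
  using wo by (intro Refl_Field_Restr2 Order_Relation.underS_Field)
    (simp add: well_order_on_def linear_order_on_def partial_order_on_def preorder_on_def)

lemma underS_subset_underS: "z \<in> underS r b \<Longrightarrow> underS r z \<subseteq> underS r b"
  using wo by (intro underS_incr) (auto simp: underS_def order_on_defs)

lemma underS_Restr_underS:
  assumes "z \<in> underS r b"
  shows "underS (Restr r (underS r b)) z = underS r z"
  using assms underS_subset_underS[OF assms] unfolding underS_def by blast

lemma is_lim_elem_Restr_underS: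
  assumes "z \<in> underS r b"
  shows "is_lim_elem (Restr r (underS r b)) z \<longleftrightarrow> is_lim_elem r z"
proof -
  have "z \<in> Field r"
    using assms by (rule BNF_Least_Fixpoint.underS_Field)
  then show ?thesis
    using assms underS_subset_underS[OF assms]
    unfolding is_lim_elem_def Field_Restr_underS underS_Restr_underS[OF assms]
    by blast
qed

lemma fin_part_Restr_underS:
  "fin_part (Restr r (underS r b))
    = {y \<in> underS r b. \<forall>z \<in> aboveS r y \<inter> underS r b. \<not> is_lim_elem r z}"
proof -
  have "aboveS (Restr r (underS r b)) y = aboveS r y \<inter> underS r b" if "y \<in> underS r b" for y
    using that unfolding aboveS_def by blast
  then show ?thesis
    unfolding fin_part_def Field_Restr_underS using is_lim_elem_Restr_underS by auto
qed

end

section \<open>Re-indexing along injections\<close>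

lemma dir_image_mem_iff:
  assumes "inj_on g (Field R)" and "a \<in> Field R" "b \<in> Field R"
  shows "(g a, g b) \<in> dir_image R g \<longleftrightarrow> (a, b) \<in> R"
  using assms unfolding dir_image_def inj_on_def by (blast intro: FieldI1 FieldI2)

lemma underS_dir_image:
  assumes inj: "inj_on g (Field R)" and x: "x \<in> Field R"
  shows "underS (dir_image R g) (g x) = g ` underS R x"
proof (intro equalityI subsetI)
  fix u assume u: "u \<in> underS (dir_image R g) (g x)"
  then obtain a where a: "a \<in> Field R" "u = g a"
    using Order_Relation.underS_Field[of "dir_image R g"] by (auto simp: dir_image_Field)
  then show "u \<in> g ` underS R x"
    using u dir_image_mem_iff[OF inj a(1) x] by (auto simp: underS_def)
next
  fix u assume "u \<in> g ` underS R x"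
  then obtain a where a: "a \<in> underS R x" "u = g a" by blast
  moreover have "a \<in> Field R" using a(1) by (rule BNF_Least_Fixpoint.underS_Field)
  ultimately show "u \<in> underS (dir_image R g) (g x)"
    using x dir_image_mem_iff[OF inj _ x] inj_on_eq_iff[OF inj] by (auto simp: underS_def)
qed

lemma dir_image_converse: "dir_image (R\<inverse>) g = (dir_image R g)\<inverse>"
  unfolding dir_image_def by blast

lemma aboveS_eq_underS_converse: "aboveS R x = underS (R\<inverse>) x"
  unfolding aboveS_def underS_def by blast

lemma aboveS_dir_image:
  assumes "inj_on g (Field R)" and "x \<in> Field R"
  shows "aboveS (dir_image R g) (g x) = g ` aboveS R x"
  using underS_dir_image[of g "R\<inverse>" x] assms
  by (simp add: aboveS_eq_underS_converse dir_image_converse)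

lemma is_lim_elem_dir_image:
  assumes inj: "inj_on g (Field R)" and x: "x \<in> Field R"
  shows "is_lim_elem (dir_image R g) (g x) \<longleftrightarrow> is_lim_elem R x"
  using x Order_Relation.underS_Field[of R x] dir_image_mem_iff[OF inj]
  unfolding is_lim_elem_def underS_dir_image[OF inj x]
  by (auto simp: dir_image_Field subset_iff)

lemma fin_part_dir_image:
  assumes inj: "inj_on g (Field R)"
  shows "fin_part (dir_image R g) = g ` fin_part R"
proof -
  have "(\<forall>z\<in>aboveS (dir_image R g) (g a). \<not> is_lim_elem (dir_image R g) z)
      \<longleftrightarrow> (\<forall>z\<in>aboveS R a. \<not> is_lim_elem R z)" if "a \<in> Field R" for a
    by (simp add: aboveS_dir_image[OF inj that] is_lim_elem_dir_image[OF inj] aboveS_Field)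
  then show ?thesis
    unfolding fin_part_def dir_image_Field by auto
qed

lemma ord_odd_dir_image:
  assumes inj: "inj_on g (Field R)"
  shows "ord_odd (dir_image R g) \<longleftrightarrow> ord_odd R"
proof -
  have "inj_on g (fin_part R)"
    using inj by (rule inj_on_subset) (auto simp: fin_part_def)
  then show ?thesis
    unfolding ord_odd_def fin_part_dir_image[OF inj] by (simp add: finite_image_iff card_image)
qed

lemma Restr_dir_image:
  assumes inj: "inj_on g (Field R)" and "X \<subseteq> Field R"
  shows "Restr (dir_image R g) (g ` X) = dir_image (Restr R X) g"
proof (intro equalityI subsetI)
  fix p assume p: "p \<in> Restr (dir_image R g) (g ` X)"
  then obtain a b where ab: "(a, b) \<in> R" "p = (g a, g b)"
    unfolding dir_image_def by blast
  have "a \<in> Field R" "b \<in> Field R" using ab(1) by (auto intro: FieldI1 FieldI2)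
  moreover have "g a \<in> g ` X" "g b \<in> g ` X" using p ab(2) by auto
  ultimately have "a \<in> X" "b \<in> X" using inj_on_image_mem_iff[OF inj _ assms(2)] by auto
  then show "p \<in> dir_image (Restr R X) g" using ab unfolding dir_image_def by blast
qed (auto simp: dir_image_def)

lemma ord_odd_segment_dir_image:
  assumes inj: "inj_on g (Field R)" and x: "x \<in> Field R"
  shows "ord_odd (Restr (dir_image R g) (underS (dir_image R g) (g x)))
    \<longleftrightarrow> ord_odd (Restr R (underS R x))"
proof -
  have "inj_on g (Field (Restr R (underS R x)))"
    using inj by (rule inj_on_subset) (auto simp: Field_def)
  then show ?thesis
    unfolding underS_dir_image[OF inj x] Restr_dir_image[OF inj Order_Relation.underS_Field]
    by (rule ord_odd_dir_image)
qed

lemma Dop_dir_image: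
  assumes inj: "inj_on g (Field R)"
  shows "Dop (dir_image R g) A = Dop R (A \<circ> g)"
proof -
  have "{b \<in> Field (dir_image R g). ord_odd (Restr (dir_image R g) (underS (dir_image R g) b))
          \<noteq> ord_odd (dir_image R g)}
      = g ` {b \<in> Field R. ord_odd (Restr R (underS R b)) \<noteq> ord_odd R}"
    using ord_odd_segment_dir_image[OF inj] ord_odd_dir_image[OF inj]
    by (auto simp: dir_image_Field)
  then show ?thesis
    unfolding Dop_eq_first_index_in first_index_in_def
    by (simp add: underS_dir_image[OF inj] image_comp)
qed

lemma Dop_cong:
  assumes "\<And>b. b \<in> Field R \<Longrightarrow> A b = A' b"
  shows "Dop R A = Dop R A'"
proof -
  have "A b - \<Union>(A ` underS R b) = A' b - \<Union>(A' ` underS R b)" if "b \<in> Field R" for b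
  proof -
    have "A ` underS R b = A' ` underS R b"
      by (rule image_cong[OF refl]) (simp add: assms BNF_Least_Fixpoint.underS_Field)
    then show ?thesis using assms that by simp
  qed
  then show ?thesis
    unfolding Dop_eq_first_index_in first_index_in_def by (intro SUP_cong) auto
qed

lemma Dclass_nat_rel:
  assumes "Well_order R" and "countable (Field R)" and "S \<in> Dclass R"
  shows "\<exists>r :: nat rel. Well_order r \<and> S \<in> Dclass r"
proof -
  obtain A where A: "S = Dop R A" "\<forall>b\<in>Field R. open (A b)"
    using assms(3) unfolding Dclass_def by blast
  define g where "g = to_nat_on (Field R)"
  define A' where "A' n = A (from_nat_into (Field R) n)" for n
  have inj: "inj_on g (Field R)"
    unfolding g_def using assms(2) by (rule inj_on_to_nat_on)
  have A'g: "A' (g b) = A b" if "b \<in> Field R" for b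
    unfolding A'_def g_def using assms(2) that by simp
  have "Dop (dir_image R g) A' = Dop R (A' \<circ> g)"
    by (rule Dop_dir_image[OF inj])
  also have "\<dots> = S"
    unfolding A(1) by (rule Dop_cong) (simp add: A'g)
  moreover have "\<forall>n\<in>Field (dir_image R g). open (A' n)"
    using A(2) A'g by (simp add: dir_image_Field)
  ultimately have "S \<in> Dclass (dir_image R g)"
    unfolding Dclass_def by blast
  moreover have "Well_order (dir_image R g)"
    by (rule Well_order_dir_image[OF assms(1) inj])
  ultimately show ?thesis by blast
qed

section \<open>Towers of a deflationary map\<close>

text \<open>The transfinite iteration of \<open>f\<close> from \<open>UNIV = \<Inter>{}\<close>, taking intersections at limit
  stages. For deflationary \<open>f\<close> it is well-ordered by \<open>\<supseteq>\<close> (Zermelo's argument).\<close>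

inductive_set tower :: "('a set \<Rightarrow> 'a set) \<Rightarrow> 'a set set" for f where
  Inter: "\<forall>X\<in>\<S>. X \<in> tower f \<Longrightarrow> \<Inter>\<S> \<in> tower f"
| step: "X \<in> tower f \<Longrightarrow> f X \<in> tower f"

locale deflation =
  fixes f :: "'a set \<Rightarrow> 'a set"
  assumes deflationary: "f X \<subseteq> X"
begin

lemma tower_subset_or_subset_step_from_psubset:
  assumes c: "\<forall>x\<in>tower f. c \<subset> x \<longrightarrow> c \<subseteq> f x" and "x \<in> tower f"
  shows "c \<subseteq> x \<or> x \<subseteq> f c"
  using \<open>x \<in> tower f\<close>
proof induction
  case (Inter \<S>)
  show ?case
  proof (cases "\<forall>X\<in>\<S>. c \<subseteq> X")
    case False
    then obtain X where "X \<in> \<S>" "\<not> c \<subseteq> X" by blast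
    with Inter.IH have "X \<subseteq> f c" by blast
    then show ?thesis using \<open>X \<in> \<S>\<close> by blast
  qed blast
next
  case (step x)
  show ?case
  proof (cases "x \<subseteq> f c")
    case True
    then show ?thesis using deflationary[of x] by blast
  next
    case False
    with step.IH have "c \<subseteq> x" by blast
    then have "c = x \<or> c \<subset> x" by blast
    then show ?thesis using c step.hyps by blast
  qed
qed

lemma tower_psubset_imp_subset_step:
  assumes "c \<in> tower f"
  shows "\<forall>x\<in>tower f. c \<subset> x \<longrightarrow> c \<subseteq> f x"
  using assms
proof induction
  case (step c)
  show ?case
  proof (intro ballI impI)
    fix x assume x: "x \<in> tower f" and "f c \<subset> x"
    then have "c \<subseteq> x"
      using tower_subset_or_subset_step_from_psubset[OF step.IH x] by blast
    then have "c = x \<or> c \<subseteq> f x"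
      using step.IH x by blast
    then show "f c \<subseteq> f x"
      using deflationary[of c] by blast
  qed
next
  case (Inter \<S>)
  show ?case
  proof (intro ballI impI)
    fix x assume x: "x \<in> tower f" and "\<Inter>\<S> \<subset> x"
    then obtain c where c: "c \<in> \<S>" "\<not> x \<subseteq> c" by blast
    have IH: "\<forall>y\<in>tower f. c \<subset> y \<longrightarrow> c \<subseteq> f y"
      using Inter.IH c(1) by blast
    have "c \<subseteq> x"
      using tower_subset_or_subset_step_from_psubset[OF IH x] c(2) deflationary[of c] by blast
    then have "c \<subseteq> f x"
      using IH x c(2) by blast
    then show "\<Inter>\<S> \<subseteq> f x" using c(1) by blast
  qed
qed

lemma tower_subset_or_subset_step:
  assumes "c \<in> tower f" and "x \<in> tower f"
  shows "c \<subseteq> x \<or> x \<subseteq> f c"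
  by (rule tower_subset_or_subset_step_from_psubset[OF tower_psubset_imp_subset_step[OF assms(1)] assms(2)])

lemma tower_chain:
  assumes "c \<in> tower f" and "x \<in> tower f"
  shows "c \<subseteq> x \<or> x \<subseteq> c"
  using tower_subset_or_subset_step[OF assms] deflationary[of c] by blast

end

locale strict_deflation = deflation +
  assumes no_fixpoint: "X \<in> tower f \<Longrightarrow> f X = X \<Longrightarrow> X = {}"
begin

lemma tower_has_largest:
  assumes "\<P> \<subseteq> tower f" and "\<P> \<noteq> {}"
  shows "\<exists>F\<in>\<P>. \<forall>G\<in>\<P>. G \<subseteq> F"
proof -
  define \<M> where "\<M> = {M \<in> tower f. \<forall>X\<in>\<P>. X \<subseteq> M}"
  define T where "T = \<Inter>\<M>"
  have T: "T \<in> tower f" unfolding T_def \<M>_def by (rule tower.Inter) blast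
  have upper: "X \<subseteq> T" if "X \<in> \<P>" for X
    using that unfolding T_def \<M>_def by blast
  show ?thesis
  proof (cases "T \<in> \<P>")
    case True
    then show ?thesis using upper by blast
  next
    case False
    have "X \<subseteq> f T" if "X \<in> \<P>" for X
    proof -
      have "X \<noteq> T" using that False by blast
      then show ?thesis
        using tower_subset_or_subset_step[OF T, of X] that assms(1) upper[OF that] by blast
    qed
    then have "f T \<in> \<M>" unfolding \<M>_def using tower.step[OF T] by blast
    then have "f T = T"
      using deflationary[of T] unfolding T_def by blast
    then have "T = {}" by (rule no_fixpoint[OF T])
    then show ?thesis
      using False assms(2) upper by blast
  qed
qed

lemma tower_layer: "\<exists>F\<in>tower f. x \<in> F \<and> x \<notin> f F"
proof -
  define F where "F = \<Inter>{G \<in> tower f. x \<in> G}"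
  have F: "F \<in> tower f" unfolding F_def by (rule tower.Inter) blast
  have x: "x \<in> F" unfolding F_def by blast
  have "x \<notin> f F"
  proof
    assume "x \<in> f F"
    then have "F \<subseteq> f F"
      using tower.step[OF F] unfolding F_def by blast
    then have "f F = F" using deflationary[of F] by blast
    then show False using no_fixpoint[OF F] x by blast
  qed
  then show ?thesis using F x by blast
qed

end

lemma countable_tower:
  fixes f :: "'a::second_countable_topology set \<Rightarrow> 'a set"
  assumes "strict_deflation f" and closed_step: "\<And>X. X \<in> tower f \<Longrightarrow> closed (f X)"
  shows "countable (tower f)"
proof -
  interpret strict_deflation f by fact
  obtain \<B> :: "'a set set" where \<B>: "countable \<B>" "topological_basis \<B>"
    using ex_countable_basis by blast
  define \<T> where "\<T> = tower f - {{}}"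
  have "\<exists>b\<in>\<B>. b \<inter> F \<noteq> {} \<and> b \<inter> f F = {}" if F: "F \<in> \<T>" for F
  proof -
    obtain x where x: "x \<in> F" "x \<notin> f F"
      using F no_fixpoint deflationary[of F] unfolding \<T>_def by blast
    have "open (- f F)" using F closed_step unfolding \<T>_def by blast
    then obtain b where "b \<in> \<B>" "x \<in> b" "b \<subseteq> - f F"
      using x topological_basisE[OF \<B>(2)] by blast
    then show ?thesis using x by blast
  qed
  then obtain \<phi> where \<phi>: "\<forall>F\<in>\<T>. \<phi> F \<in> \<B> \<and> \<phi> F \<inter> F \<noteq> {} \<and> \<phi> F \<inter> f F = {}"
    by (metis bchoice)
  have "\<phi> F \<noteq> \<phi> G" if "F \<in> \<T>" "G \<in> \<T>" "F \<subset> G" for F G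
  proof -
    have "F \<subseteq> f G"
      using that tower_subset_or_subset_step[of G F] unfolding \<T>_def by blast
    then show ?thesis using \<phi> that(1,2) by blast
  qed
  then have "inj_on \<phi> \<T>"
    using tower_chain unfolding \<T>_def by (intro inj_onI) (metis DiffE psubsetI)
  moreover have "countable (\<phi> ` \<T>)"
    using \<phi> by (intro countable_subset[OF _ \<B>(1)]) blast
  ultimately have "countable \<T>"
    by (rule countable_image_inj_on[rotated])
  then show ?thesis
    unfolding \<T>_def by simp
qed

section \<open>The ordinal omega times theta\<close>

locale supset_wellordered =
  fixes \<T> :: "'a set set"
  assumes chain: "F \<in> \<T> \<Longrightarrow> G \<in> \<T> \<Longrightarrow> F \<subseteq> G \<or> G \<subseteq> F"
    and has_largest: "\<P> \<subseteq> \<T> \<Longrightarrow> \<P> \<noteq> {} \<Longrightarrow> \<exists>F\<in>\<P>. \<forall>G\<in>\<P>. G \<subseteq> F"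
begin

text \<open>The ordinal product \<open>\<omega> \<cdot> \<theta>\<close>, where \<open>\<theta>\<close> is the order type of \<open>\<T>\<close> under reverse
  inclusion: the elements below \<open>(F, k)\<close> form an ordinal \<open>\<omega> \<cdot> \<beta> + k\<close>, of the parity of \<open>k\<close>.\<close>

definition lex_omega :: "('a set \<times> nat) rel" where
  "lex_omega = {((F, i), (G, j)). F \<in> \<T> \<and> G \<in> \<T> \<and> (G \<subset> F \<or> F = G \<and> i \<le> j)}"

lemma lex_omega_iff [simp]:
  "((F, i), (G, j)) \<in> lex_omega \<longleftrightarrow> F \<in> \<T> \<and> G \<in> \<T> \<and> (G \<subset> F \<or> F = G \<and> i \<le> j)"
  by (simp add: lex_omega_def)

lemma Field_lex_omega: "Field lex_omega = \<T> \<times> UNIV"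
proof (intro equalityI subsetI)
  fix p assume "p \<in> Field lex_omega"
  then show "p \<in> \<T> \<times> UNIV"
    by (auto simp: Field_def lex_omega_def)
next
  fix p :: "'a set \<times> nat" assume "p \<in> \<T> \<times> UNIV"
  then have "(p, p) \<in> lex_omega" by (cases p) simp
  then show "p \<in> Field lex_omega" by (rule FieldI1)
qed

lemma wf_lex_omega: "wf (lex_omega - Id)"
proof (rule wfI_min)
  fix x :: "'a set \<times> nat" and Q assume "x \<in> Q"
  show "\<exists>z\<in>Q. \<forall>y. (y, z) \<in> lex_omega - Id \<longrightarrow> y \<notin> Q"
  proof (cases "Q \<inter> Field lex_omega = {}")
    case True
    then show ?thesis
      using \<open>x \<in> Q\<close> by (blast intro: FieldI2)
  next
    case False
    define \<P> where "\<P> = fst ` (Q \<inter> Field lex_omega)"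
    have "\<P> \<subseteq> \<T>" "\<P> \<noteq> {}"
      using False unfolding \<P>_def by (auto simp: Field_lex_omega)
    then obtain F where F: "F \<in> \<P>" and largest: "\<And>G. G \<in> \<P> \<Longrightarrow> G \<subseteq> F"
      by (metis has_largest)
    define k where "k = (LEAST k. (F, k) \<in> Q)"
    have "(F, k) \<in> Q"
      using F unfolding k_def \<P>_def by (auto intro: LeastI)
    moreover have "y \<notin> Q" if "(y, (F, k)) \<in> lex_omega - Id" for y
    proof
      assume "y \<in> Q"
      obtain G i where y: "y = (G, i)" by (cases y)
      have "G \<subseteq> F"
        using largest[of G] \<open>y \<in> Q\<close> that y unfolding \<P>_def by (force simp: Field_lex_omega)
      then have "G = F" "i < k"
        using that y by auto
      then show False
        using \<open>y \<in> Q\<close> y Least_le[of "\<lambda>k. (F, k) \<in> Q" i] unfolding k_def by simp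
    qed
    ultimately show ?thesis by blast
  qed
qed

lemma Well_order_lex_omega: "Well_order lex_omega"
  unfolding well_order_on_def linear_order_on_def partial_order_on_def preorder_on_def
proof (intro conjI)
  show "lex_omega \<subseteq> Field lex_omega \<times> Field lex_omega"
    by (auto intro: FieldI1 FieldI2)
  show "refl_on (Field lex_omega) lex_omega"
    unfolding Field_lex_omega by (auto simp: refl_on_def)
  show "trans lex_omega"
    unfolding trans_def lex_omega_def by auto
  show "antisym lex_omega"
    unfolding antisym_def lex_omega_def by auto
  show "total_on (Field lex_omega) lex_omega"
    unfolding total_on_def Field_lex_omega using chain by fastforce
  show "wf (lex_omega - Id)"
    by (rule wf_lex_omega)
qed

lemma underS_lex_omega:
  assumes "F \<in> \<T>"
  shows "underS lex_omega (F, k) = {(G, i). G \<in> \<T> \<and> F \<subset> G} \<union> {(F, i) | i. i < k}"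
  using assms by (auto simp: underS_def)

lemma is_lim_elem_lex_omega:
  assumes "F \<in> \<T>"
  shows "is_lim_elem lex_omega (F, k) \<longleftrightarrow> k = 0"
proof
  assume lim: "is_lim_elem lex_omega (F, k)"
  show "k = 0"
  proof (rule ccontr)
    assume "k \<noteq> 0"
    then have "(F, k - 1) \<in> underS lex_omega (F, k)"
      and "\<forall>z\<in>underS lex_omega (F, k). (z, (F, k - 1)) \<in> lex_omega"
      using assms by (auto simp: underS_lex_omega)
    then show False using lim unfolding is_lim_elem_def by blast
  qed
next
  assume "k = 0"
  have "\<not> (\<forall>z\<in>underS lex_omega (F, 0). (z, y) \<in> lex_omega)"
    if "y \<in> underS lex_omega (F, 0)" for y
  proof
    assume max: "\<forall>z\<in>underS lex_omega (F, 0). (z, y) \<in> lex_omega"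
    obtain G i where y: "y = (G, i)" by (cases y)
    then have "G \<in> \<T>" "F \<subset> G"
      using that assms by (auto simp: underS_lex_omega)
    then show False
      using max[rule_format, of "(G, Suc i)"] assms y by (auto simp: underS_lex_omega)
  qed
  then show "is_lim_elem lex_omega (F, k)"
    using assms \<open>k = 0\<close> by (auto simp: is_lim_elem_def Field_lex_omega)
qed

lemma fin_part_segment_lex_omega:
  assumes F: "F \<in> \<T>" and "0 < k"
  shows "fin_part (Restr lex_omega (underS lex_omega (F, k))) = (\<lambda>i. (F, i)) ` {..<k}"
  unfolding fin_part_Restr_underS[OF Well_order_lex_omega]
proof (intro equalityI subsetI)
  fix y
  assume "y \<in> {y \<in> underS lex_omega (F, k).
    \<forall>z \<in> aboveS lex_omega y \<inter> underS lex_omega (F, k). \<not> is_lim_elem lex_omega z}"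
  then have y: "y \<in> underS lex_omega (F, k)"
    and nolim: "\<forall>z \<in> aboveS lex_omega y \<inter> underS lex_omega (F, k). \<not> is_lim_elem lex_omega z"
    by auto
  obtain G i where y_eq: "y = (G, i)" by (cases y)
  show "y \<in> (\<lambda>i. (F, i)) ` {..<k}"
  proof (rule ccontr)
    assume "y \<notin> (\<lambda>i. (F, i)) ` {..<k}"
    then have "G \<in> \<T>" "F \<subset> G"
      using y F y_eq by (auto simp: underS_lex_omega)
    then have "(F, 0) \<in> aboveS lex_omega y \<inter> underS lex_omega (F, k)"
      using F \<open>0 < k\<close> y_eq by (auto simp: underS_lex_omega aboveS_def)
    then show False
      using nolim is_lim_elem_lex_omega[OF F] by blast
  qed
next
  fix y assume "y \<in> (\<lambda>i. (F, i)) ` {..<k}"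
  then obtain j where j: "j < k" "y = (F, j)" by blast
  have "\<not> is_lim_elem lex_omega z"
    if "z \<in> aboveS lex_omega (F, j) \<inter> underS lex_omega (F, k)" for z
  proof -
    obtain G i where z: "z = (G, i)" by (cases z)
    then have "G = F" "j < i"
      using that F by (auto simp: underS_lex_omega aboveS_def)
    then show ?thesis
      using z is_lim_elem_lex_omega[OF F] by simp
  qed
  moreover have "y \<in> underS lex_omega (F, k)"
    using j F by (simp add: underS_lex_omega)
  ultimately show "y \<in> {y \<in> underS lex_omega (F, k).
    \<forall>z \<in> aboveS lex_omega y \<inter> underS lex_omega (F, k). \<not> is_lim_elem lex_omega z}"
    using j by blast
qed

lemma ord_odd_segment_lex_omega:
  assumes "F \<in> \<T>" and "0 < k"
  shows "ord_odd (Restr lex_omega (underS lex_omega (F, k))) \<longleftrightarrow> odd k"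
proof -
  have "card ((\<lambda>i. (F, i)) ` {..<k}) = k"
    by (simp add: card_image inj_on_def)
  then show ?thesis
    unfolding ord_odd_def fin_part_segment_lex_omega[OF assms] by simp
qed

lemma not_ord_odd_lex_omega: "\<not> ord_odd lex_omega"
proof
  assume odd: "ord_odd lex_omega"
  then have "fin_part lex_omega \<noteq> {}"
    unfolding ord_odd_def by auto
  then obtain y where y: "y \<in> fin_part lex_omega" by blast
  obtain F i where y_eq: "y = (F, i)" by (cases y)
  then have F: "F \<in> \<T>"
    using y by (auto simp: fin_part_def Field_lex_omega)
  have "trans lex_omega" "antisym lex_omega"
    using Well_order_lex_omega by (auto simp: order_on_defs)
  moreover have "(F, j) \<in> aboveS lex_omega y" if "i < j" for j
    using that F y_eq by (simp add: aboveS_def)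
  ultimately have "(F, j) \<in> fin_part lex_omega" if "i < j" for j
    using that by (intro fin_part_aboveS[OF _ _ y]) auto
  then have "(\<lambda>j. (F, j)) ` {i<..} \<subseteq> fin_part lex_omega"
    by auto
  moreover have "infinite ((\<lambda>j. (F, j)) ` {i<..})"
    by (simp add: finite_image_iff inj_on_def infinite_Ioi)
  ultimately show False
    using odd finite_subset unfolding ord_odd_def by blast
qed

end

section \<open>Hausdorff's derivative\<close>

definition mixed_part :: "'a::topological_space set \<Rightarrow> 'a set \<Rightarrow> 'a set" where
  "mixed_part S F = F \<inter> closure (F \<inter> S) \<inter> closure (F - S)"

lemma mixed_part_subset: "mixed_part S F \<subseteq> F"
  unfolding mixed_part_def by blast

lemma closed_mixed_part: "closed F \<Longrightarrow> closed (mixed_part S F)"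
  unfolding mixed_part_def by (intro closed_Int closed_closure)

lemma closed_tower_mixed_part: "F \<in> tower (mixed_part S) \<Longrightarrow> closed F"
  by (induction rule: tower.induct) (auto intro: closed_Inter closed_mixed_part)

locale mixed_free =
  fixes S :: "'a::topological_space set"
  assumes no_mixed: "closed F \<Longrightarrow> mixed_part S F = F \<Longrightarrow> F = {}"
begin

lemma tower_no_fixpoint: "F \<in> tower (mixed_part S) \<Longrightarrow> mixed_part S F = F \<Longrightarrow> F = {}"
  using no_mixed closed_tower_mixed_part by blast

sublocale strict_deflation "mixed_part S"
  by unfold_locales (fact mixed_part_subset, fact tower_no_fixpoint)

sublocale supset_wellordered "tower (mixed_part S) - {{}}"
proof
  fix F G assume "F \<in> tower (mixed_part S) - {{}}" "G \<in> tower (mixed_part S) - {{}}"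
  then show "F \<subseteq> G \<or> G \<subseteq> F"
    using tower_chain by blast
next
  fix \<P> assume \<P>: "\<P> \<subseteq> tower (mixed_part S) - {{}}" "\<P> \<noteq> {}"
  then have "\<P> \<subseteq> tower (mixed_part S)" by blast
  then show "\<exists>F\<in>\<P>. \<forall>G\<in>\<P>. G \<subseteq> F"
    using \<P>(2) by (rule tower_has_largest)
qed

text \<open>A point \<open>x\<close> of the layer \<open>F - mixed_part S F\<close> first enters the set indexed by
  \<open>(F, 1)\<close> if \<open>x \<in> S\<close>, and the one indexed by \<open>(F, 2)\<close> otherwise.\<close>

definition open_seq :: "'a set \<times> nat \<Rightarrow> 'a set" where
  "open_seq = (\<lambda>(F, k).
     if k = 1 then - closure (F - S) else if k = 2 then - mixed_part S F else {})"

lemma open_open_seq: "F \<in> tower (mixed_part S) \<Longrightarrow> open (open_seq (F, k))"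
  unfolding open_seq_def using closed_mixed_part[OF closed_tower_mixed_part] by auto

lemma first_index_open_seq:
  assumes F: "F \<in> tower (mixed_part S)" and x: "x \<in> F" "x \<notin> mixed_part S F"
    and k: "k = (if x \<in> S then 1 else 2)"
  shows "x \<in> open_seq (F, k)" and "\<forall>c\<in>underS lex_omega (F, k). x \<notin> open_seq c"
proof -
  have F\<T>: "F \<in> tower (mixed_part S) - {{}}" using F x by blast
  show "x \<in> open_seq (F, k)"
    using x k closure_subset[of "F \<inter> S"] by (auto simp: open_seq_def mixed_part_def)
  show "\<forall>c\<in>underS lex_omega (F, k). x \<notin> open_seq c"
  proof
    fix c assume c: "c \<in> underS lex_omega (F, k)"
    obtain G i where c_eq: "c = (G, i)" by (cases c)
    show "x \<notin> open_seq c"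
    proof (cases "G = F")
      case True
      then have "i < k" using c c_eq F\<T> by (auto simp: underS_lex_omega)
      then show ?thesis
        using True c_eq k x closure_subset[of "F - S"] by (auto simp: open_seq_def split: if_splits)
    next
      case False
      then have G: "G \<in> tower (mixed_part S)" "F \<subset> G"
        using c c_eq F\<T> by (auto simp: underS_lex_omega)
      then have "F \<subseteq> mixed_part S G"
        using tower_subset_or_subset_step[OF G(1) F] by blast
      moreover have "open_seq (G, i) \<subseteq> - mixed_part S G"
        by (auto simp: open_seq_def mixed_part_def)
      ultimately show ?thesis using c_eq x(1) by blast
    qed
  qed
qed

lemma Dop_open_seq: "Dop lex_omega open_seq = S"
proof (intro set_eqI)
  fix x
  obtain F where F: "F \<in> tower (mixed_part S)" "x \<in> F" "x \<notin> mixed_part S F"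
    using tower_layer by blast
  define k :: nat where "k = (if x \<in> S then 1 else 2)"
  have F\<T>: "F \<in> tower (mixed_part S) - {{}}"
    using F by blast
  then have "(F, k) \<in> Field lex_omega"
    by (simp add: Field_lex_omega)
  then have "x \<in> Dop lex_omega open_seq
      \<longleftrightarrow> ord_odd (Restr lex_omega (underS lex_omega (F, k))) \<noteq> ord_odd lex_omega"
    using first_index_open_seq[OF F k_def] by (intro mem_Dop_iff_first_index Well_order_lex_omega)
  also have "\<dots> \<longleftrightarrow> odd k"
    using ord_odd_segment_lex_omega[OF F\<T>, of k] not_ord_odd_lex_omega by (simp add: k_def)
  finally show "x \<in> Dop lex_omega open_seq \<longleftrightarrow> x \<in> S"
    by (simp add: k_def)
qed

end

lemma mixed_free_if_Delta02:
  fixes S :: "'a::topological_space set"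
  assumes baire: "\<And>(F :: 'a set) (G :: nat \<Rightarrow> 'a set).
             closed F \<Longrightarrow> (\<forall>n. G n \<in> Pi02 \<and> G n \<subseteq> F \<and> F \<subseteq> closure (G n))
             \<Longrightarrow> F \<subseteq> closure (\<Inter>n. G n)"
    and "S \<in> Delta02"
  shows "mixed_free S"
proof (rule mixed_free.intro)
  fix F assume "closed F" and "mixed_part S F = F"
  define G where "G n = (if even n then F \<inter> S else F - S)" for n :: nat
  have "- F \<in> Sigma02" "S \<in> Sigma02" "- S \<in> Sigma02"
    using assms(2) \<open>closed F\<close> by (auto intro: open_Sigma02 simp: Delta02_def Pi02_def)
  then have "F \<inter> S \<in> Pi02" "F - S \<in> Pi02"
    unfolding Pi02_def by (auto simp: Compl_Int Diff_eq intro: Sigma02_Un)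
  moreover have "F \<subseteq> closure (F \<inter> S)" "F \<subseteq> closure (F - S)"
    using \<open>mixed_part S F = F\<close> unfolding mixed_part_def by blast+
  ultimately have "F \<subseteq> closure (\<Inter>n. G n)"
    using \<open>closed F\<close> by (intro baire) (auto simp: G_def)
  moreover have "(\<Inter>n. G n) = {}"
    using INT_lower[of 0 UNIV G] INT_lower[of 1 UNIV G] by (auto simp: G_def)
  ultimately show "F = {}" by simp
qed

lemma Dclass_if_mixed_free:
  fixes S :: "'a::second_countable_topology set"
  assumes "mixed_free S"
  shows "\<exists>r :: nat rel. Well_order r \<and> S \<in> Dclass r"
proof -
  interpret mixed_free S by fact
  have "countable (tower (mixed_part S))"
    using strict_deflation_axioms closed_mixed_part[OF closed_tower_mixed_part]
    by (rule countable_tower)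
  then have "countable (Field lex_omega)"
    by (simp add: Field_lex_omega)
  moreover have "S \<in> Dclass lex_omega"
    using Dop_open_seq open_open_seq unfolding Dclass_def by (force simp: Field_lex_omega)
  ultimately show ?thesis
    using Dclass_nat_rel Well_order_lex_omega by blast
qed

theorem theorem3p15:
  assumes "\<And>(F :: 'a::second_countable_topology set) (G :: nat \<Rightarrow> 'a set).
             closed F \<Longrightarrow> (\<forall>n. G n \<in> Pi02 \<and> G n \<subseteq> F \<and> F \<subseteq> closure (G n))
             \<Longrightarrow> F \<subseteq> closure (\<Inter>n. G n)"
  shows "\<Union>{Dclass r | r :: nat rel. Well_order r} = (Delta02 :: 'a set set)"
proof (intro equalityI subsetI)
  fix X :: "'a set" assume "X \<in> \<Union>{Dclass r | r :: nat rel. Well_order r}"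
  then obtain r :: "nat rel" and A where "Well_order r" "X = Dop r A" "\<forall>b\<in>Field r. open (A b)"
    unfolding Dclass_def by blast
  then show "X \<in> Delta02"
    using Dop_Delta02 by blast
next
  fix X :: "'a set" assume "X \<in> Delta02"
  then have "\<exists>r :: nat rel. Well_order r \<and> X \<in> Dclass r"
    by (intro Dclass_if_mixed_free mixed_free_if_Delta02[OF assms])
  then show "X \<in> \<Union>{Dclass r | r :: nat rel. Well_order r}"
    by blast
qed

end
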